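(* Let $G$ be a graph, $k\in\mathbb N$, and let $\mathcal F$ be a set of stars in $\vec S_k(G)$ all of which have finite interior. Let $X$ be a critical vertex set of $G$ with $|X|\ge k$. Then $\tau:=\{(A,B)\in\vec S_k(G): X\subseteq B\}$ is a principal $\mathcal F$-tangle of $S_k(G)$. In particular, if $\sigma\subseteq\vec S_k(G)$ is a star with $X\subseteq\mathrm{int}(\sigma)$, then $\sigma\subseteq\tau$.
   Context: Graphs may be infinite. A separation of $G$ is a set $\{A,B\}$ with $A,B\subseteq V(G)$, $A\cup B=V(G)$ and no edge of $G$ between $A\setminus B$ and $B\setminus A$; its order is $|A\cap B|$. $S_k(G)$ is the set of separations of order $<k$ and $\vec S_k(G)$ the set of their orientations $(A,B)$, $(B,A)$. Order: $(A,B)\le(C,D)$ iff $A\subseteq C$ and $B\supseteq D$. An orientation of $S_k(G)$ is a set containing exactly one orientation of each element; consistent if there are no distinct $\{A,B\},\{C,D\}\in S_k(G)$ with $(A,B)<(C,D)$, $(B,A)\in O$, $(C,D)\in O$; principal if for every set $Y$ of fewer than $k$ vertices it contains $(V(G)\setminus V(K),V(K)\cup Y)$ for some component $K$ of $G-Y$. A star is a set $\sigma$ of oriented finite-order separations, not containing $(V(G),V(G))$, with $(A,B)\le(D,C)$ for distinct $(A,B),(C,D)\in\sigma$; its interior is $\mathrm{int}(\sigma)=\bigcap_{(A,B)\in\sigma}B$. An $\mathcal F$-tangle of $S_k(G)$ is a consistent orientation of $S_k(G)$ having no element of $\mathcal F$ as a subset. A critical vertex set of $G$ is a finite set $X\subseteq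 V(G)$ such that infinitely many components $K$ of $G-X$ satisfy $N_G(K)=X$. *)

theory Defs
  imports Main
begin

definition graph :: "'v set \<Rightarrow> ('v \<Rightarrow> 'v \<Rightarrow> bool) \<Rightarrow> bool" where
  "graph V E \<longleftrightarrow> (\<forall>x y. E x y \<longrightarrow> E y x \<and> x \<noteq> y \<and> x \<in> V \<and> y \<in> V)"

definition component :: "'v set \<Rightarrow> ('v \<Rightarrow> 'v \<Rightarrow> bool) \<Rightarrow> 'v set \<Rightarrow> 'v set \<Rightarrow> bool" where
  "component V E Y K \<longleftrightarrow>
     (\<exists>x \<in> V - Y. K = {y. (\<lambda>a b. E a b \<and> a \<notin> Y \<and> b \<notin> Y)\<^sup>*\<^sup>* x y})"

definition nbhd :: "('v \<Rightarrow> 'v \<Rightarrow> bool) \<Rightarrow> 'v set \<Rightarrow> 'v set" where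
  "nbhd E K = {y. y \<notin> K \<and> (\<exists>x \<in> K. E x y)}"

definition is_sep :: "'v set \<Rightarrow> ('v \<Rightarrow> 'v \<Rightarrow> bool) \<Rightarrow> 'v set \<Rightarrow> 'v set \<Rightarrow> bool" where
  "is_sep V E A B \<longleftrightarrow> A \<subseteq> V \<and> B \<subseteq> V \<and> A \<union> B = V \<and>
     \<not> (\<exists>x \<in> A - B. \<exists>y \<in> B - A. E x y)"

text \<open>Oriented separations of order < k (the order is the cardinality of A \<inter> B,
which must therefore be finite).\<close>

definition vecS :: "nat \<Rightarrow> 'v set \<Rightarrow> ('v \<Rightarrow> 'v \<Rightarrow> bool) \<Rightarrow> ('v set \<times> 'v set) set" where
  "vecS k V E = {(A, B). is_sep V E A B \<and> finite (A \<inter> B) \<and> card (A \<inter> B) < k}"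

definition sep_le :: "'v set \<times> 'v set \<Rightarrow> 'v set \<times> 'v set \<Rightarrow> bool" where
  "sep_le s t \<longleftrightarrow> fst s \<subseteq> fst t \<and> snd t \<subseteq> snd s"

definition sep_less :: "'v set \<times> 'v set \<Rightarrow> 'v set \<times> 'v set \<Rightarrow> bool" where
  "sep_less s t \<longleftrightarrow> sep_le s t \<and> s \<noteq> t"

definition orientation :: "nat \<Rightarrow> 'v set \<Rightarrow> ('v \<Rightarrow> 'v \<Rightarrow> bool) \<Rightarrow> ('v set \<times> 'v set) set \<Rightarrow> bool" where
  "orientation k V E Ori \<longleftrightarrow> Ori \<subseteq> vecS k V E \<and>
     (\<forall>(A, B) \<in> vecS k V E. ((A, B) \<in> Ori \<or> (B, A) \<in> Ori) \<and>
        ((A, B) \<in> Ori \<and> (B, A) \<in> Ori \<longrightarrow> A = B))"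

definition consistent :: "nat \<Rightarrow> 'v set \<Rightarrow> ('v \<Rightarrow> 'v \<Rightarrow> bool) \<Rightarrow> ('v set \<times> 'v set) set \<Rightarrow> bool" where
  "consistent k V E Ori \<longleftrightarrow>
     \<not> (\<exists>A B C D. (A, B) \<in> vecS k V E \<and> (C, D) \<in> vecS k V E \<and> {A, B} \<noteq> {C, D} \<and>
          sep_less (A, B) (C, D) \<and> (B, A) \<in> Ori \<and> (C, D) \<in> Ori)"

definition principal :: "nat \<Rightarrow> 'v set \<Rightarrow> ('v \<Rightarrow> 'v \<Rightarrow> bool) \<Rightarrow> ('v set \<times> 'v set) set \<Rightarrow> bool" where
  "principal k V E Ori \<longleftrightarrow>
     (\<forall>Y. Y \<subseteq> V \<and> finite Y \<and> card Y < k \<longrightarrow>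
        (\<exists>K. component V E Y K \<and> (V - K, K \<union> Y) \<in> Ori))"

definition star :: "'v set \<Rightarrow> ('v \<Rightarrow> 'v \<Rightarrow> bool) \<Rightarrow> ('v set \<times> 'v set) set \<Rightarrow> bool" where
  "star V E \<sigma> \<longleftrightarrow>
     (\<forall>(A, B) \<in> \<sigma>. is_sep V E A B \<and> finite (A \<inter> B)) \<and> (V, V) \<notin> \<sigma> \<and>
     (\<forall>A B C D. (A, B) \<in> \<sigma> \<and> (C, D) \<in> \<sigma> \<and> (A, B) \<noteq> (C, D) \<longrightarrow> sep_le (A, B) (D, C))"

definition interior :: "'v set \<Rightarrow> ('v set \<times> 'v set) set \<Rightarrow> 'v set" where
  "interior V \<sigma> = V \<inter> (\<Inter>(A, B) \<in> \<sigma>. B)"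

definition F_tangle :: "nat \<Rightarrow> 'v set \<Rightarrow> ('v \<Rightarrow> 'v \<Rightarrow> bool) \<Rightarrow> ('v set \<times> 'v set) set set
     \<Rightarrow> ('v set \<times> 'v set) set \<Rightarrow> bool" where
  "F_tangle k V E \<F> Ori \<longleftrightarrow> orientation k V E Ori \<and> consistent k V E Ori \<and>
     (\<forall>\<sigma> \<in> \<F>. \<not> \<sigma> \<subseteq> Ori)"

definition critical :: "'v set \<Rightarrow> ('v \<Rightarrow> 'v \<Rightarrow> bool) \<Rightarrow> 'v set \<Rightarrow> bool" where
  "critical V E X \<longleftrightarrow> finite X \<and> X \<subseteq> V \<and>
     infinite {K. component V E X K \<and> nbhd E K = X}"

end

theory Submission
  imports Defs
begin

text \<open>Since X is critical and distinct components of G - X are disjoint, for every finite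
vertex set S infinitely many components K of G - X with N(K) = X avoid S. For S = A \<inter> B,
where (A, B) has order < k, such a K lies on one side, say in A - B, whence X = N(K) \<subseteq> A;
and X \<subseteq> A \<inter> B is impossible as |A \<inter> B| < k \<le> |X|. So exactly one orientation of {A, B}
has X in its second side, and consistency follows. For S the finite interior of a star \<sigma>,
K leaves the second side B of some (A, B) \<in> \<sigma>; as A \<inter> B \<subseteq> int(\<sigma>), K \<subseteq> A - B and so
X \<subseteq> A, i.e. (A, B) \<notin> \<tau>. For principality, given |Y| < k, a component of G - X with
neighbourhood X that avoids Y joins all of X - Y inside G - Y, so X \<subseteq> K \<union> Y for a single
component K of G - Y.\<close>

abbreviation towards :: "nat \<Rightarrow> 'v set \<Rightarrow> ('v \<Rightarrow> 'v \<Rightarrow> bool) \<Rightarrow> 'v set \<Rightarrow> ('v set \<times> 'v set) set"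
  where "towards k V E X \<equiv> {(A, B) \<in> vecS k V E. X \<subseteq> B}"

definition adj_avoiding :: "('v \<Rightarrow> 'v \<Rightarrow> bool) \<Rightarrow> 'v set \<Rightarrow> 'v \<Rightarrow> 'v \<Rightarrow> bool" where
  "adj_avoiding E Y = (\<lambda>a b. E a b \<and> a \<notin> Y \<and> b \<notin> Y)"

definition comp_of :: "('v \<Rightarrow> 'v \<Rightarrow> bool) \<Rightarrow> 'v set \<Rightarrow> 'v \<Rightarrow> 'v set" where
  "comp_of E Y x = {y. (adj_avoiding E Y)\<^sup>*\<^sup>* x y}"

lemma component_iff_comp_of: "component V E Y K \<longleftrightarrow> (\<exists>x \<in> V - Y. K = comp_of E Y x)"
  unfolding component_def comp_of_def adj_avoiding_def by simp

lemma comp_of_self: "x \<in> comp_of E Y x"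
  unfolding comp_of_def by simp

lemma comp_of_step: "y \<in> comp_of E Y x \<Longrightarrow> adj_avoiding E Y y z \<Longrightarrow> z \<in> comp_of E Y x"
  unfolding comp_of_def by (simp add: rtranclp.rtrancl_into_rtrancl)

lemma comp_of_eq:
  assumes "graph V E" and "y \<in> comp_of E Y x"
  shows "comp_of E Y y = comp_of E Y x"
proof -
  have "symp (adj_avoiding E Y)"
    using assms(1) unfolding symp_def adj_avoiding_def graph_def by blast
  then have "symp (adj_avoiding E Y)\<^sup>*\<^sup>*" by (rule symp_rtranclp)
  then have "(adj_avoiding E Y)\<^sup>*\<^sup>* y x"
    using assms(2) unfolding comp_of_def by (blast dest: sympD)
  then show ?thesis
    using assms(2) unfolding comp_of_def by (auto intro: rtranclp_trans)
qed

lemma comp_of_subset: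
  assumes "graph V E" and "x \<in> V - Y"
  shows "comp_of E Y x \<subseteq> V - Y"
proof
  fix y assume "y \<in> comp_of E Y x"
  then have "(adj_avoiding E Y)\<^sup>*\<^sup>* x y" unfolding comp_of_def by simp
  then show "y \<in> V - Y"
  proof (induction rule: rtranclp_induct)
    case (step y z)
    then show ?case using assms(1) unfolding adj_avoiding_def graph_def by blast
  qed (use assms(2) in simp)
qed

lemma component_subset: "graph V E \<Longrightarrow> component V E Y K \<Longrightarrow> K \<subseteq> V - Y"
  unfolding component_iff_comp_of by (auto dest: comp_of_subset)

lemma component_nonempty: "component V E Y K \<Longrightarrow> K \<noteq> {}"
  unfolding component_iff_comp_of by (auto intro: comp_of_self)

lemma component_eq:
  "graph V E \<Longrightarrow> component V E Y K \<Longrightarrow> component V E Y K' \<Longrightarrow> z \<in> K \<Longrightarrow> z \<in> K' \<Longrightarrow> K = K'"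
  unfolding component_iff_comp_of by (metis comp_of_eq)

lemma finite_components_meeting:
  assumes "graph V E" and "finite S"
  shows "finite {K. component V E Y K \<and> K \<inter> S \<noteq> {}}" (is "finite ?Q")
proof -
  define pick where "pick K = (SOME z. z \<in> K \<inter> S)" for K
  have pick: "pick K \<in> K \<inter> S" if "K \<in> ?Q" for K
    unfolding pick_def by (rule someI_ex) (use that in blast)
  have "inj_on pick ?Q"
  proof (rule inj_onI)
    fix K K' assume "K \<in> ?Q" "K' \<in> ?Q" "pick K = pick K'"
    then show "K = K'"
      using pick component_eq[OF assms(1)] by (metis IntE mem_Collect_eq)
  qed
  moreover have "pick ` ?Q \<subseteq> S" using pick by blast
  ultimately show ?thesis using assms(2) by (rule inj_on_finite)
qed

lemma critical_component_avoiding: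
  assumes "graph V E" and "critical V E X" and "finite S"
  obtains K where "component V E X K" "nbhd E K = X" "K \<inter> S = {}"
proof -
  let ?good = "{K. component V E X K \<and> nbhd E K = X}"
  let ?bad = "{K. component V E X K \<and> K \<inter> S \<noteq> {}}"
  have "infinite ?good" using assms(2) unfolding critical_def by simp
  with finite_components_meeting[OF assms(1,3)] have "infinite (?good - ?bad)"
    by (rule Diff_infinite_finite)
  then obtain K where "K \<in> ?good - ?bad" using infinite_imp_nonempty by blast
  then show thesis by (intro that) auto
qed

lemma is_sep_swap: "graph V E \<Longrightarrow> is_sep V E A B \<Longrightarrow> is_sep V E B A"
  unfolding is_sep_def graph_def by blast

lemma vecS_swap: "graph V E \<Longrightarrow> (A, B) \<in> vecS k V E \<Longrightarrow> (B, A) \<in> vecS k V E"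
  unfolding vecS_def using is_sep_swap by (fastforce simp: Int_commute)

lemma component_within_side:
  assumes "graph V E" and "is_sep V E A B" and "component V E Y K"
    and "K \<inter> (A \<inter> B) = {}" and "v \<in> K" and "v \<in> A - B"
  shows "K \<subseteq> A - B"
proof
  have K: "K = comp_of E Y v"
    using assms(1,3,5) unfolding component_iff_comp_of by (metis comp_of_eq)
  fix y assume "y \<in> K"
  then have "(adj_avoiding E Y)\<^sup>*\<^sup>* v y" unfolding K comp_of_def by simp
  then show "y \<in> A - B"
  proof (induction rule: rtranclp_induct)
    case base
    show ?case using assms(6) .
  next
    case (step y z)
    have "z \<in> K" using step.hyps unfolding K comp_of_def by simp
    moreover have "z \<in> V" and "E y z"
      using assms(1) step.hyps(2) unfolding adj_avoiding_def graph_def by auto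
    ultimately show ?case using assms(2,4) step.IH unfolding is_sep_def by blast
  qed
qed

lemma nbhd_subset_side: "graph V E \<Longrightarrow> is_sep V E A B \<Longrightarrow> K \<subseteq> A - B \<Longrightarrow> nbhd E K \<subseteq> A"
  unfolding nbhd_def is_sep_def graph_def by blast

lemma critical_subset_side:
  assumes "graph V E" and "critical V E X" and "is_sep V E A B" and "finite (A \<inter> B)"
  shows "X \<subseteq> A \<or> X \<subseteq> B"
proof -
  obtain K where K: "component V E X K" "nbhd E K = X" "K \<inter> (A \<inter> B) = {}"
    by (rule critical_component_avoiding[OF assms(1,2,4)])
  obtain v where "v \<in> K" using component_nonempty[OF K(1)] by blast
  moreover have "v \<in> V" using \<open>v \<in> K\<close> component_subset[OF assms(1) K(1)] by blast
  ultimately consider "v \<in> A - B" | "v \<in> B - A"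
    using K(3) assms(3) unfolding is_sep_def by blast
  then show ?thesis
  proof cases
    case 1
    then have "K \<subseteq> A - B" using component_within_side[OF assms(1,3) K(1,3) \<open>v \<in> K\<close>] by blast
    then show ?thesis using nbhd_subset_side[OF assms(1,3)] K(2) by blast
  next
    case 2
    have "K \<inter> (B \<inter> A) = {}" using K(3) by blast
    then have "K \<subseteq> B - A"
      using component_within_side[OF assms(1) is_sep_swap[OF assms(1,3)] K(1) _ \<open>v \<in> K\<close> 2] by blast
    then show ?thesis using nbhd_subset_side[OF assms(1) is_sep_swap[OF assms(1,3)]] K(2) by blast
  qed
qed

lemma card_subset_separator_less:
  assumes "(A, B) \<in> vecS k V E" and "X \<subseteq> A" and "X \<subseteq> B"
  shows "card X < k"
proof -
  have "card X \<le> card (A \<inter> B)"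
    using assms unfolding vecS_def by (intro card_mono) auto
  then show ?thesis using assms(1) unfolding vecS_def by simp
qed

lemma star_is_sep: "star V E \<sigma> \<Longrightarrow> (A, B) \<in> \<sigma> \<Longrightarrow> is_sep V E A B"
  unfolding star_def by fast

lemma star_sep_le:
  "star V E \<sigma> \<Longrightarrow> (A, B) \<in> \<sigma> \<Longrightarrow> (C, D) \<in> \<sigma> \<Longrightarrow> (A, B) \<noteq> (C, D) \<Longrightarrow> sep_le (A, B) (D, C)"
  unfolding star_def by fast

lemma star_separator_subset_interior:
  assumes "star V E \<sigma>" and "(A, B) \<in> \<sigma>"
  shows "A \<inter> B \<subseteq> interior V \<sigma>"
proof
  fix w assume w: "w \<in> A \<inter> B"
  have "w \<in> D" if "(C, D) \<in> \<sigma>" for C D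
  proof (cases "(C, D) = (A, B)")
    case False
    then show ?thesis using star_sep_le[OF assms that] w unfolding sep_le_def by auto
  qed (use w in auto)
  moreover have "w \<in> V" using star_is_sep[OF assms] w unfolding is_sep_def by blast
  ultimately show "w \<in> interior V \<sigma>" unfolding interior_def by auto
qed

lemma interior_subset_snd: "(A, B) \<in> \<sigma> \<Longrightarrow> interior V \<sigma> \<subseteq> B"
  unfolding interior_def by auto

lemma critical_subset_small_side_of_star:
  assumes "graph V E" and "critical V E X" and "star V E \<sigma>" and "finite (interior V \<sigma>)"
  shows "\<exists>(A, B) \<in> \<sigma>. X \<subseteq> A"
proof -
  obtain K where K: "component V E X K" "nbhd E K = X" "K \<inter> interior V \<sigma> = {}"
    by (rule critical_component_avoiding[OF assms(1,2,4)])
  obtain v where v: "v \<in> K" using component_nonempty[OF K(1)] by blast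
  then have "v \<in> V" using component_subset[OF assms(1) K(1)] by blast
  moreover have "v \<notin> interior V \<sigma>" using K(3) v by blast
  ultimately obtain A B where AB: "(A, B) \<in> \<sigma>" "v \<notin> B" unfolding interior_def by blast
  have sep: "is_sep V E A B" using star_is_sep[OF assms(3) AB(1)] .
  have "K \<inter> (A \<inter> B) = {}"
    using K(3) star_separator_subset_interior[OF assms(3) AB(1)] by blast
  moreover have "v \<in> A" using sep \<open>v \<in> V\<close> AB(2) unfolding is_sep_def by blast
  ultimately have "K \<subseteq> A - B" using component_within_side[OF assms(1) sep K(1)] v AB(2) by blast
  then have "X \<subseteq> A" using nbhd_subset_side[OF assms(1) sep] K(2) by blast
  then show ?thesis using AB(1) by blast
qed

lemma neighbourhood_in_comp_of:
  assumes "graph V E" and "component V E X C" and "nbhd E C = X" and "C \<inter> Y = {}"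
    and "x \<in> X - Y"
  shows "X \<subseteq> comp_of E Y x \<union> Y"
proof -
  obtain c where C: "C = comp_of E X c" using assms(2) unfolding component_iff_comp_of by blast
  have C_reach: "(adj_avoiding E Y)\<^sup>*\<^sup>* c y" if "y \<in> C" for y
  proof -
    have "(adj_avoiding E X)\<^sup>*\<^sup>* c y" using that unfolding C comp_of_def by simp
    then show ?thesis
    proof (induction rule: rtranclp_induct)
      case (step y z)
      then have "y \<in> C" "z \<in> C" unfolding C comp_of_def by auto
      then have "adj_avoiding E Y y z"
        using step.hyps(2) assms(4) unfolding adj_avoiding_def by blast
      with step.IH show ?case by (rule rtranclp.rtrancl_into_rtrancl)
    qed simp
  qed
  have X_reach: "x' \<in> comp_of E Y c" if x': "x' \<in> X - Y" for x'
  proof -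
    obtain c' where c': "c' \<in> C" "E c' x'" using assms(3) x' unfolding nbhd_def by blast
    then have "adj_avoiding E Y c' x'" using assms(4) x' unfolding adj_avoiding_def by blast
    with C_reach[OF c'(1)] show ?thesis
      unfolding comp_of_def by (simp add: rtranclp.rtrancl_into_rtrancl)
  qed
  have "comp_of E Y x = comp_of E Y c" using comp_of_eq[OF assms(1) X_reach[OF assms(5)]] .
  then show ?thesis using X_reach by blast
qed

lemma is_sep_comp_of:
  assumes "graph V E" and "Y \<subseteq> V" and "x \<in> V - Y"
  shows "is_sep V E (V - comp_of E Y x) (comp_of E Y x \<union> Y)"
proof -
  have K: "comp_of E Y x \<subseteq> V - Y" using comp_of_subset[OF assms(1,3)] .
  have closed: "u \<in> comp_of E Y x" if "u \<notin> Y" "w \<in> comp_of E Y x" "E u w" for u w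
  proof -
    have "adj_avoiding E Y w u"
      using that K assms(1) unfolding adj_avoiding_def graph_def by blast
    then show ?thesis using comp_of_step that(2) by fast
  qed
  show ?thesis unfolding is_sep_def
  proof (intro conjI)
    show "\<not> (\<exists>u \<in> (V - comp_of E Y x) - (comp_of E Y x \<union> Y).
             \<exists>w \<in> (comp_of E Y x \<union> Y) - (V - comp_of E Y x). E u w)"
      using closed assms(2) by blast
  qed (use K assms(2) in auto)
qed

lemma orientation_towards:
  assumes "graph V E" and "critical V E X" and "k \<le> card X"
  shows "orientation k V E (towards k V E X)"
proof -
  have "((A, B) \<in> towards k V E X \<or> (B, A) \<in> towards k V E X) \<and>
        ((A, B) \<in> towards k V E X \<and> (B, A) \<in> towards k V E X \<longrightarrow> A = B)"
    if AB: "(A, B) \<in> vecS k V E" for A B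
  proof -
    have "is_sep V E A B" "finite (A \<inter> B)" using AB unfolding vecS_def by auto
    then have "X \<subseteq> A \<or> X \<subseteq> B" using critical_subset_side[OF assms(1,2)] by blast
    moreover have "\<not> (X \<subseteq> A \<and> X \<subseteq> B)"
      using card_subset_separator_less[OF AB, of X] assms(3) by auto
    ultimately show ?thesis using AB vecS_swap[OF assms(1) AB] by auto
  qed
  then show ?thesis unfolding orientation_def by auto
qed

lemma consistent_towards:
  assumes "k \<le> card X"
  shows "consistent k V E (towards k V E X)"
proof -
  have False if "(C, D) \<in> vecS k V E" "sep_less (A, B) (C, D)" "X \<subseteq> A" "X \<subseteq> D" for A B C D
  proof -
    have "X \<subseteq> C" using that(2,3) unfolding sep_less_def sep_le_def by auto
    then show False using card_subset_separator_less[OF that(1) _ that(4)] assms by simp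
  qed
  then show ?thesis unfolding consistent_def by auto
qed

lemma principal_towards:
  assumes "graph V E" and "critical V E X" and "k \<le> card X"
  shows "principal k V E (towards k V E X)"
  unfolding principal_def
proof clarify
  fix Y assume Y: "Y \<subseteq> V" "finite Y" "card Y < k"
  have "\<not> X \<subseteq> Y"
  proof
    assume "X \<subseteq> Y"
    then have "card X \<le> card Y" by (rule card_mono[OF Y(2)])
    then show False using Y(3) assms(3) by linarith
  qed
  then obtain x where x: "x \<in> X - Y" by blast
  have "X \<subseteq> V" using assms(2) unfolding critical_def by simp
  with x have xV: "x \<in> V - Y" by blast
  obtain C where C: "component V E X C" "nbhd E C = X" "C \<inter> Y = {}"
    by (rule critical_component_avoiding[OF assms(1,2) Y(2)])
  let ?K = "comp_of E Y x"
  have small: "(V - ?K) \<inter> (?K \<union> Y) \<subseteq> Y" by blast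
  have "finite ((V - ?K) \<inter> (?K \<union> Y))" using finite_subset[OF small Y(2)] .
  moreover have "card ((V - ?K) \<inter> (?K \<union> Y)) < k"
    using card_mono[OF Y(2) small] Y(3) by linarith
  ultimately have "(V - ?K, ?K \<union> Y) \<in> vecS k V E"
    using is_sep_comp_of[OF assms(1) Y(1) xV] unfolding vecS_def by simp
  moreover have "X \<subseteq> ?K \<union> Y" by (rule neighbourhood_in_comp_of[OF assms(1) C x])
  moreover have "component V E Y ?K" unfolding component_iff_comp_of using xV by blast
  ultimately show "\<exists>K. component V E Y K \<and> (V - K, K \<union> Y) \<in> towards k V E X" by auto
qed

theorem lemma3p7:
  fixes V :: "'v set" and E :: "'v \<Rightarrow> 'v \<Rightarrow> bool" and k :: nat
    and \<F> :: "('v set \<times> 'v set) set set" and X :: "'v set"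
  assumes "graph V E"
    and "\<forall>\<sigma> \<in> \<F>. star V E \<sigma> \<and> \<sigma> \<subseteq> vecS k V E \<and> finite (interior V \<sigma>)"
    and "critical V E X"
    and "card X \<ge> k"
  shows "F_tangle k V E \<F> {(A, B) \<in> vecS k V E. X \<subseteq> B}
       \<and> principal k V E {(A, B) \<in> vecS k V E. X \<subseteq> B}
       \<and> (\<forall>\<sigma>. star V E \<sigma> \<and> \<sigma> \<subseteq> vecS k V E \<and> X \<subseteq> interior V \<sigma>
              \<longrightarrow> \<sigma> \<subseteq> {(A, B) \<in> vecS k V E. X \<subseteq> B})"
proof (intro conjI allI impI)
  have "\<not> \<sigma> \<subseteq> towards k V E X" if "\<sigma> \<in> \<F>" for \<sigma>
  proof
    assume towards: "\<sigma> \<subseteq> towards k V E X"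
    have "star V E \<sigma>" "finite (interior V \<sigma>)" using assms(2) that by auto
    then obtain A B where AB: "(A, B) \<in> \<sigma>" "X \<subseteq> A"
      using critical_subset_small_side_of_star[OF assms(1,3)] by blast
    with towards have "(A, B) \<in> vecS k V E" "X \<subseteq> B" by auto
    then have "card X < k" using card_subset_separator_less AB(2) by blast
    then show False using assms(4) by simp
  qed
  then show "F_tangle k V E \<F> (towards k V E X)"
    unfolding F_tangle_def
    using orientation_towards[OF assms(1,3,4)] consistent_towards[OF assms(4)] by blast
  show "principal k V E (towards k V E X)" by (rule principal_towards[OF assms(1,3,4)])
next
  fix \<sigma> assume \<sigma>: "star V E \<sigma> \<and> \<sigma> \<subseteq> vecS k V E \<and> X \<subseteq> interior V \<sigma>"
  have "X \<subseteq> B" if "(A, B) \<in> \<sigma>" for A B using \<sigma> interior_subset_snd[OF that] by blast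
  then show "\<sigma> \<subseteq> towards k V E X" using \<sigma> by auto
qed

end
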